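(* Assume the Setting and consider Algorithm 1 with noisy data $y^\delta$ ($\|y^\delta-y\|\le\delta$, $\delta>0$), where $\tau>1$ and $\mu_0>0$ satisfy $c_0:=1-\frac{1+\eta}{\tau}-\eta-\frac{\mu_0}{4\sigma}>0$. Let $k\ge0$ be an integer such that $\|r_n^\delta\|>\tau\delta$ for all $0\le n<k$. Then $x_n^\delta\in B_{2\rho}(x_0)$ for all $0\le n\le k$, and for every solution $\hat x$ of $F(x)=y$ with $\hat x\in B_{2\rho}(x_0)\cap\mathrm{dom}(\mathcal R)$, setting $\Delta_n^\delta:=D_{\mathcal R}^{\xi_n^\delta}(\hat x,x_n^\delta)$, one has $\Delta_{n+1}^\delta\le\Delta_n^\delta-c_0\alpha_n^\delta\|r_n^\delta\|^2$ for all $0\le n<k$.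
   Context: Setting. Let $X,Y$ be real Hilbert spaces. Let $\mathcal R:X\to(-\infty,\infty]$ be proper, lower semicontinuous and strongly convex with constant $\sigma>0$, i.e. $\mathcal R(t\bar x+(1-t)x)+\sigma t(1-t)\|\bar x-x\|^2\le t\mathcal R(\bar x)+(1-t)\mathcal R(x)$ for all $\bar x,x\in\mathrm{dom}(\mathcal R)$ and $t\in[0,1]$. For $\xi\in\partial\mathcal R(x)$ (subdifferential) the Bregman distance is $D_{\mathcal R}^{\xi}(z,x)=\mathcal R(z)-\mathcal R(x)-\langle\xi,z-x\rangle$. The convex conjugate $\mathcal R^*$ is differentiable with $\|\nabla\mathcal R^*(\bar\xi)-\nabla\mathcal R^*(\xi)\|\le\|\bar\xi-\xi\|/(2\sigma)$, and $\nabla\mathcal R^*(\xi)=\arg\min_{x\in X}\{\mathcal R(x)-\langle\xi,x\rangle\}$ (unique minimizer), with $\xi\in\partial\mathcal R(\nabla\mathcal R^*(\xi))$. Let $F:\mathrm{dom}(F)\subset X\to Y$ and $y\in Y$. Assume: (b) there are $\rho>0$, $x_0\in X$, $\xi_0\in\partial\mathcal R(x_0)$ with $B_{2\rho}(x_0):=\{x:\|x-x_0\|\le 2\rho\}\subset\mathrm{dom}(F)$, and $F(x)=y$ has a solution $\bar x$ with $D_{\mathcal R}^{\xi_0}(\bar x,x_0)\le\sigma\rho^2$; (c) $F$ is weakly closed: if $x_n\in\mathrm{dom}(F)$, $x_n\rightharpoonup x$ and $F(x_n)\to v$, then $x\in\mathrm{dom}(F)$ and $F(x)=v$; (d) there are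 bounded linear operators $L(x):X\to Y$, $x\in B_{2\rho}(x_0)$, with $x\mapsto L(x)$ continuous on $B_{2\rho}(x_0)$, a constant $\eta\in[0,1)$ with $\|F(x)-F(\bar x)-L(\bar x)(x-\bar x)\|\le\eta\|F(x)-F(\bar x)\|$ for all $x,\bar x\in B_{2\rho}(x_0)$, and a constant $L>0$ with $\|L(x)\|\le L$ on $B_{2\rho}(x_0)$. Under these assumptions $F(x)=y$ has a unique solution $x^\dagger\in\mathrm{dom}(F)$ minimizing $D_{\mathcal R}^{\xi_0}(x,x_0)$ over all solutions; it satisfies $\|x^\dagger-x_0\|\le\rho$. Algorithm 1 (noisy data $y^\delta$ with $\|y^\delta-y\|\le\delta$, $\delta>0$). Parameters: $\tau>1$, $\beta\in(0,\infty]$, $\mu_0>0$, $\mu_1>0$, and a fixed choice of one of two step-size rules: (constant) $\alpha_n^\delta=\mu_0/L^2$, or (adaptive) $\alpha_n^\delta=\min\{\mu_0\|r_n^\delta\|^2/\|g_n^\delta\|^2,\mu_1\}$ (with $\mu_0\|r_n^\delta\|^2/\|g_n^\delta\|^2:=+\infty$ if $g_n^\delta=0$). Set $\xi_{-1}^\delta=\xi_0^\delta=\xi_0$, $x_0^\delta=x_0=\nabla\mathcal R^*(\xi_0)$. For $n\ge0$: (i) $r_n^\delta:=F(x_n^\delta)-y^\delta$; if $\|r_n^\delta\|\le\tau\delta$, stop and output $x_n^\delta$ (the stopping index is denoted $n_\delta$). (ii) $g_n^\delta:=L(x_n^\delta)^*r_n^\delta$ and $\alpha_n^\delta$ by the chosen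 rule. (iii) $m_n^\delta:=\xi_n^\delta-\xi_{n-1}^\delta$; $\tilde\gamma_0^\delta:=0$ and for $n\ge1$, $\tilde\gamma_n^\delta:=\langle m_n^\delta,x_n^\delta-x_{n-1}^\delta\rangle-(1-\eta)\alpha_{n-1}^\delta\|r_{n-1}^\delta\|^2+(1+\eta)\alpha_{n-1}^\delta\delta\|r_{n-1}^\delta\|+\beta_{n-1}^\delta\tilde\gamma_{n-1}^\delta$. (iv) $\beta_n^\delta:=\min\{\max\{0,(\alpha_n^\delta\langle g_n^\delta,m_n^\delta\rangle-2\sigma\tilde\gamma_n^\delta)/\|m_n^\delta\|^2\},\beta\}$ if $m_n^\delta\ne0$, and $\beta_n^\delta:=0$ if $m_n^\delta=0$. (v) $\xi_{n+1}^\delta:=\xi_n^\delta-\alpha_n^\delta g_n^\delta+\beta_n^\delta m_n^\delta$, $x_{n+1}^\delta:=\nabla\mathcal R^*(\xi_{n+1}^\delta)$. *)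

theory Defs
  imports "HOL-Analysis.Analysis" "HOL-Library.Liminf_Limsup"
begin

text \<open>Real Hilbert spaces are modelled as types of class real_inner + complete_space.\<close>

definition proper_fun :: "('a \<Rightarrow> ereal) \<Rightarrow> bool" where
  "proper_fun R \<longleftrightarrow> (\<forall>x. R x \<noteq> -\<infinity>) \<and> (\<exists>x. R x < \<infinity>)"

definition effdom :: "('a \<Rightarrow> ereal) \<Rightarrow> 'a set" where
  "effdom R = {x. R x < \<infinity>}"

definition lsc_fun :: "('a::metric_space \<Rightarrow> ereal) \<Rightarrow> bool" where
  "lsc_fun R \<longleftrightarrow> (\<forall>x s. s \<longlonglongrightarrow> x \<longrightarrow> R x \<le> liminf (\<lambda>n. R (s n)))"

definition strongly_convex :: "('a::real_normed_vector \<Rightarrow> ereal) \<Rightarrow> real \<Rightarrow> bool" where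
  "strongly_convex R \<sigma> \<longleftrightarrow>
     (\<forall>xb\<in>effdom R. \<forall>x\<in>effdom R. \<forall>t::real. 0 \<le> t \<and> t \<le> 1 \<longrightarrow>
        R (t *\<^sub>R xb + (1 - t) *\<^sub>R x) + ereal (\<sigma> * t * (1 - t) * (norm (xb - x))\<^sup>2)
          \<le> ereal t * R xb + ereal (1 - t) * R x)"

definition subdiff :: "('a::real_inner \<Rightarrow> ereal) \<Rightarrow> 'a \<Rightarrow> 'a set" where
  "subdiff R x = {\<xi>. R x < \<infinity> \<and> R x \<noteq> -\<infinity> \<and>
                     (\<forall>z. R z \<ge> R x + ereal (\<xi> \<bullet> (z - x)))}"

definition bregman :: "('a::real_inner \<Rightarrow> ereal) \<Rightarrow> 'a \<Rightarrow> 'a \<Rightarrow> 'a \<Rightarrow> ereal" where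
  "bregman R \<xi> z x = R z - R x - ereal (\<xi> \<bullet> (z - x))"

text \<open>Gradient of the convex conjugate: the unique minimiser of R(x) - <xi,x>.\<close>
definition grad_conj :: "('a::real_inner \<Rightarrow> ereal) \<Rightarrow> 'a \<Rightarrow> 'a" where
  "grad_conj R \<xi> = (THE x. \<forall>z. R x - ereal (\<xi> \<bullet> x) \<le> R z - ereal (\<xi> \<bullet> z))"

definition weakly_conv :: "(nat \<Rightarrow> 'a::real_inner) \<Rightarrow> 'a \<Rightarrow> bool" where
  "weakly_conv s x \<longleftrightarrow> (\<forall>z. (\<lambda>n. s n \<bullet> z) \<longlonglongrightarrow> x \<bullet> z)"

definition weakly_closed_op :: "('a::real_inner \<Rightarrow> 'b::real_normed_vector) \<Rightarrow> 'a set \<Rightarrow> bool" where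
  "weakly_closed_op F D \<longleftrightarrow>
     (\<forall>s x v. (\<forall>n. s n \<in> D) \<and> weakly_conv s x \<and> (\<lambda>n. F (s n)) \<longlonglongrightarrow> v
        \<longrightarrow> x \<in> D \<and> F x = v)"

end

theory Submission
  imports Defs
begin

text \<open>For a solution \<open>z\<close> of \<open>F z = y\<close> and the \<sigma>-strongly convex \<open>R\<close>, the three-point inequality for
  Bregman distances gives \<open>\<Delta>\<^sub>n\<^sub>+\<^sub>1 - \<Delta>\<^sub>n \<le> \<Parallel>\<xi>\<^sub>n\<^sub>+\<^sub>1 - \<xi>\<^sub>n\<Parallel>\<^sup>2/(4\<sigma>) + \<langle>\<xi>\<^sub>n\<^sub>+\<^sub>1 - \<xi>\<^sub>n, x\<^sub>n - z\<rangle>\<close>.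
  With \<open>\<xi>\<^sub>n\<^sub>+\<^sub>1 - \<xi>\<^sub>n = -\<alpha>\<^sub>n g\<^sub>n + \<beta>\<^sub>n m\<^sub>n\<close>, the gradient part is controlled by the tangential cone
  condition, the step-size rule and the discrepancy \<open>\<Parallel>r\<^sub>n\<Parallel> > \<tau>\<delta>\<close>, while \<open>\<beta>\<^sub>n\<close> is chosen exactly so
  that the momentum part is non-positive, given the invariant \<open>\<langle>m\<^sub>n, x\<^sub>n - z\<rangle> \<le> \<gamma>\<^sub>n\<close> which the
  recursion for \<open>\<gamma>\<^sub>n\<close> propagates. Both estimates need \<open>x\<^sub>n\<close> in \<open>B\<^sub>2\<^sub>\<rho>(x\<^sub>0)\<close>; this follows by
  induction, since the descent for a reference solution \<open>x_ref\<close> keeps every iterate within \<open>\<rho>\<close>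
  of \<open>x_ref\<close>. The minimiser defining \<open>\<nabla>R*\<close> and the adjoints \<open>L(x)*\<close> exist by minimising strongly
  convex lower semicontinuous functions on the Hilbert space.\<close>

definition strongly_convex_on :: "'a::real_normed_vector set \<Rightarrow> ('a \<Rightarrow> real) \<Rightarrow> real \<Rightarrow> bool" where
  "strongly_convex_on D f \<sigma> \<longleftrightarrow> (\<forall>a\<in>D. \<forall>b\<in>D. \<forall>t. 0 \<le> t \<and> t \<le> 1 \<longrightarrow>
      t *\<^sub>R a + (1 - t) *\<^sub>R b \<in> D \<and>
      f (t *\<^sub>R a + (1 - t) *\<^sub>R b) + \<sigma> * t * (1 - t) * (norm (a - b))\<^sup>2 \<le> t * f a + (1 - t) * f b)"

text \<open>Sequential closedness of \<open>D\<close> and sequential lower semicontinuity of \<open>f\<close> on \<open>D\<close>, phrased with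
  convergent majorants \<open>c\<close> so that no extended reals are needed.\<close>
definition seq_lsc_on :: "'a::metric_space set \<Rightarrow> ('a \<Rightarrow> real) \<Rightarrow> bool" where
  "seq_lsc_on D f \<longleftrightarrow> (\<forall>s x c l. s \<longlonglongrightarrow> x \<and> (\<forall>n. s n \<in> D) \<and> (\<forall>n. f (s n) \<le> c n) \<and> c \<longlonglongrightarrow> l
      \<longrightarrow> x \<in> D \<and> f x \<le> l)"

lemma strongly_convex_on_midpoint:
  assumes "strongly_convex_on D f \<sigma>" "a \<in> D" "b \<in> D"
  shows "(1/2) *\<^sub>R a + (1/2) *\<^sub>R b \<in> D"
    and "f ((1/2) *\<^sub>R a + (1/2) *\<^sub>R b) + \<sigma>/4 * (norm (a - b))\<^sup>2 \<le> (f a + f b) / 2"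
proof -
  have "\<forall>t. 0 \<le> t \<and> t \<le> 1 \<longrightarrow> t *\<^sub>R a + (1 - t) *\<^sub>R b \<in> D \<and>
      f (t *\<^sub>R a + (1 - t) *\<^sub>R b) + \<sigma> * t * (1 - t) * (norm (a - b))\<^sup>2 \<le> t * f a + (1 - t) * f b"
    using assms unfolding strongly_convex_on_def by blast
  from this[rule_format, of "1/2"]
  show "(1/2) *\<^sub>R a + (1/2) *\<^sub>R b \<in> D"
    and "f ((1/2) *\<^sub>R a + (1/2) *\<^sub>R b) + \<sigma>/4 * (norm (a - b))\<^sup>2 \<le> (f a + f b) / 2"
    by (simp_all add: field_simps)
qed

lemma strongly_convex_on_minus_inner:
  assumes "strongly_convex_on D f \<sigma>"
  shows "strongly_convex_on D (\<lambda>z. f z - \<xi> \<bullet> z) \<sigma>"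
  unfolding strongly_convex_on_def
proof (intro ballI allI impI conjI)
  fix a b and t :: real
  assume ab: "a \<in> D" "b \<in> D" and t: "0 \<le> t \<and> t \<le> 1"
  then show "t *\<^sub>R a + (1 - t) *\<^sub>R b \<in> D"
    using assms unfolding strongly_convex_on_def by blast
  have "f (t *\<^sub>R a + (1 - t) *\<^sub>R b) + \<sigma> * t * (1 - t) * (norm (a - b))\<^sup>2 \<le> t * f a + (1 - t) * f b"
    using assms ab t unfolding strongly_convex_on_def by blast
  moreover have "\<xi> \<bullet> (t *\<^sub>R a + (1 - t) *\<^sub>R b) = t * (\<xi> \<bullet> a) + (1 - t) * (\<xi> \<bullet> b)"
    by (simp add: inner_add_right)
  ultimately show "f (t *\<^sub>R a + (1 - t) *\<^sub>R b) - \<xi> \<bullet> (t *\<^sub>R a + (1 - t) *\<^sub>R b)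
      + \<sigma> * t * (1 - t) * (norm (a - b))\<^sup>2 \<le> t * (f a - \<xi> \<bullet> a) + (1 - t) * (f b - \<xi> \<bullet> b)"
    by (simp add: algebra_simps)
qed

lemma seq_lsc_on_minus_inner:
  fixes f :: "'a::real_inner \<Rightarrow> real"
  assumes "seq_lsc_on D f"
  shows "seq_lsc_on D (\<lambda>z. f z - \<xi> \<bullet> z)"
  unfolding seq_lsc_on_def
proof (intro allI impI)
  fix s x c l
  assume H: "s \<longlonglongrightarrow> x \<and> (\<forall>n. s n \<in> D) \<and> (\<forall>n. f (s n) - \<xi> \<bullet> s n \<le> c n) \<and> c \<longlonglongrightarrow> l"
  have "(\<lambda>n. c n + \<xi> \<bullet> s n) \<longlonglongrightarrow> l + \<xi> \<bullet> x"
    using H by (intro tendsto_intros) auto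
  moreover have "\<forall>n. f (s n) \<le> c n + \<xi> \<bullet> s n"
    using H by (simp add: algebra_simps)
  ultimately have "x \<in> D \<and> f x \<le> l + \<xi> \<bullet> x"
    using assms H unfolding seq_lsc_on_def by (metis (no_types, lifting))
  then show "x \<in> D \<and> f x - \<xi> \<bullet> x \<le> l"
    by simp
qed

lemma LIMSEQ_norm_diff_le_inverse_Suc:
  fixes s :: "nat \<Rightarrow> 'a::real_normed_vector"
  assumes "\<And>n. norm (s n - x) \<le> inverse (real (Suc n))"
  shows "s \<longlonglongrightarrow> x"
proof -
  have "(\<lambda>n. s n - x) \<longlonglongrightarrow> 0"
    by (rule Lim_null_comparison[OF always_eventually LIMSEQ_inverse_real_of_nat]) (use assms in auto)
  then show ?thesis
    by (simp add: LIM_zero_iff)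
qed

lemma young_quadratic:
  fixes a b \<sigma> :: real
  assumes "\<sigma> > 0"
  shows "a * b - \<sigma> * b\<^sup>2 \<le> a\<^sup>2 / (4 * \<sigma>)"
proof -
  have "0 \<le> (a - 2 * \<sigma> * b)\<^sup>2"
    by simp
  then have "4 * \<sigma> * (a * b - \<sigma> * b\<^sup>2) \<le> a\<^sup>2"
    by (simp add: power2_eq_square algebra_simps)
  then show ?thesis
    using assms by (simp add: field_simps)
qed

lemma seq_lsc_on_locally_bdd_below:
  fixes f :: "'a::real_normed_vector \<Rightarrow> real"
  assumes lsc: "seq_lsc_on D f" and x1: "x1 \<in> D"
  shows "\<exists>\<epsilon>>0. \<forall>z\<in>D. norm (z - x1) \<le> \<epsilon> \<longrightarrow> f x1 - 1 \<le> f z"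
proof (rule ccontr)
  assume "\<not> ?thesis"
  then have "\<forall>n. \<exists>z. z \<in> D \<and> norm (z - x1) \<le> inverse (real (Suc n)) \<and> f z < f x1 - 1"
    by (metis not_le of_nat_0_less_iff positive_imp_inverse_positive zero_less_Suc)
  then obtain s where s: "\<And>n. s n \<in> D" "\<And>n. norm (s n - x1) \<le> inverse (real (Suc n))"
    "\<And>n. f (s n) < f x1 - 1"
    by metis
  have "s \<longlonglongrightarrow> x1"
    using s(2) by (rule LIMSEQ_norm_diff_le_inverse_Suc)
  then have "f x1 \<le> f x1 - 1"
    using lsc s unfolding seq_lsc_on_def by (metis less_imp_le tendsto_const)
  then show False
    by simp
qed

text \<open>Strong convexity propagates the local lower bound along segments, with a quadratic gain.\<close>
lemma strongly_convex_on_bdd_below: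
  fixes f :: "'a::real_normed_vector \<Rightarrow> real"
  assumes sc: "strongly_convex_on D f \<sigma>" and \<sigma>: "\<sigma> > 0" and lsc: "seq_lsc_on D f" and x1: "x1 \<in> D"
  shows "\<exists>B. \<forall>z\<in>D. B \<le> f z"
proof -
  obtain \<epsilon> where \<epsilon>: "\<epsilon> > 0" "\<And>z. z \<in> D \<Longrightarrow> norm (z - x1) \<le> \<epsilon> \<Longrightarrow> f x1 - 1 \<le> f z"
    using seq_lsc_on_locally_bdd_below[OF lsc x1] by blast
  define a where "a = 1/\<epsilon> + \<sigma> * \<epsilon>"
  have "f x1 - 1 - a\<^sup>2 / (4 * \<sigma>) \<le> f z" if z: "z \<in> D" for z
  proof (cases "norm (z - x1) \<le> \<epsilon>")
    case True
    then show ?thesis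
      using \<epsilon> z \<sigma> by (smt (verit) divide_nonneg_pos zero_le_power2)
  next
    case False
    define d where "d = norm (z - x1)"
    define t where "t = \<epsilon> / d"
    have d: "d > \<epsilon>"
      using False by (simp add: d_def)
    then have t: "0 < t" "t < 1"
      using \<epsilon> by (simp_all add: t_def)
    define w where "w = t *\<^sub>R z + (1 - t) *\<^sub>R x1"
    have wD: "w \<in> D" and cv: "f w + \<sigma> * t * (1 - t) * d\<^sup>2 \<le> t * f z + (1 - t) * f x1"
      using sc z x1 t unfolding strongly_convex_on_def w_def d_def by auto
    have "w - x1 = t *\<^sub>R (z - x1)"
      by (simp add: w_def algebra_simps)
    then have "norm (w - x1) = t * d"
      using t by (simp add: d_def)
    also have "\<dots> = \<epsilon>"
      using d \<epsilon> by (simp add: t_def)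
    finally have "norm (w - x1) = \<epsilon>" .
    then have "f x1 - 1 \<le> f w"
      using \<epsilon> wD by simp
    with cv t have "f z \<ge> f x1 - 1/t + \<sigma> * (1 - t) * d\<^sup>2"
      by (simp add: field_simps)
    moreover have "1/t = d/\<epsilon>" "\<sigma> * (1 - t) * d\<^sup>2 = \<sigma> * d\<^sup>2 - \<sigma> * \<epsilon> * d"
      using d \<epsilon> by (simp_all add: t_def field_simps power2_eq_square)
    moreover have "a * d - \<sigma> * d\<^sup>2 \<le> a\<^sup>2 / (4 * \<sigma>)"
      by (rule young_quadratic[OF \<sigma>])
    moreover have "d/\<epsilon> + \<sigma> * \<epsilon> * d = a * d"
      using \<epsilon> by (simp add: a_def field_simps)
    ultimately show ?thesis
      by linarith
  qed
  then show ?thesis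
    by blast
qed

text \<open>The midpoint inequality bounds \<open>\<Parallel>s p - s q\<Parallel>\<^sup>2\<close> by the excess of \<open>f (s p)\<close> and \<open>f (s q)\<close> over
  the infimum.\<close>
lemma strongly_convex_on_minimizing_seq_Cauchy:
  assumes sc: "strongly_convex_on D f \<sigma>" and \<sigma>: "\<sigma> > 0" and \<mu>_le: "\<And>z. z \<in> D \<Longrightarrow> \<mu> \<le> f z"
    and s: "\<And>n. s n \<in> D" "\<And>n. f (s n) < \<mu> + inverse (real (Suc n))"
  shows "Cauchy s"
proof (rule metric_CauchyI)
  fix \<epsilon> :: real
  assume \<epsilon>: "\<epsilon> > 0"
  define e where "e n = inverse (real (Suc n))" for n
  obtain N where N: "e N < \<sigma> * \<epsilon>\<^sup>2 / 4"
    unfolding e_def using reals_Archimedean \<sigma> \<epsilon>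
    by (metis divide_pos_pos zero_less_numeral zero_less_power mult_pos_pos)
  have "dist (s p) (s q) < \<epsilon>" if "N \<le> p" "N \<le> q" for p q
  proof -
    let ?mid = "(1/2) *\<^sub>R s p + (1/2) *\<^sub>R s q"
    have "4 * f ?mid + \<sigma> * (norm (s p - s q))\<^sup>2 \<le> 2 * f (s p) + 2 * f (s q)"
      using strongly_convex_on_midpoint(2)[OF sc s(1) s(1), of p q] by (simp add: field_simps)
    moreover have "\<mu> \<le> f ?mid"
      using \<mu>_le strongly_convex_on_midpoint(1)[OF sc s(1) s(1)] by blast
    moreover have "e p \<le> e N" "e q \<le> e N"
      using that by (simp_all add: e_def le_imp_inverse_le)
    ultimately have "\<sigma> * (norm (s p - s q))\<^sup>2 < \<sigma> * \<epsilon>\<^sup>2"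
      using s(2)[of p] s(2)[of q] N unfolding e_def[symmetric] by linarith
    then have "(norm (s p - s q))\<^sup>2 < \<epsilon>\<^sup>2"
      using \<sigma> by simp
    then show ?thesis
      using \<epsilon> by (simp add: dist_norm power_less_imp_less_base)
  qed
  then show "\<exists>M. \<forall>p\<ge>M. \<forall>q\<ge>M. dist (s p) (s q) < \<epsilon>"
    by blast
qed

lemma strongly_convex_on_has_min:
  fixes f :: "'a::{real_normed_vector, complete_space} \<Rightarrow> real"
  assumes sc: "strongly_convex_on D f \<sigma>" and \<sigma>: "\<sigma> > 0" and lsc: "seq_lsc_on D f" and "D \<noteq> {}"
  shows "\<exists>x\<in>D. \<forall>z\<in>D. f x \<le> f z"
proof -
  obtain x1 where x1: "x1 \<in> D"
    using \<open>D \<noteq> {}\<close> by blast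
  have bdd: "bdd_below (f ` D)"
    using strongly_convex_on_bdd_below[OF sc \<sigma> lsc x1] by (auto intro: bdd_belowI2)
  define \<mu> where "\<mu> = Inf (f ` D)"
  have \<mu>_le: "\<mu> \<le> f z" if "z \<in> D" for z
    unfolding \<mu>_def using bdd that by (auto intro: cInf_lower)
  have "\<exists>z\<in>D. f z < \<mu> + inverse (real (Suc n))" for n
    using cInf_lessD[of "f ` D" "\<mu> + inverse (real (Suc n))"] \<open>D \<noteq> {}\<close> by (auto simp: \<mu>_def)
  then obtain s where s: "\<And>n. s n \<in> D" "\<And>n. f (s n) < \<mu> + inverse (real (Suc n))"
    by metis
  obtain x where x: "s \<longlonglongrightarrow> x"
    using strongly_convex_on_minimizing_seq_Cauchy[OF sc \<sigma> \<mu>_le s] convergent_eq_Cauchy convergent_def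
    by blast
  have "(\<lambda>n. \<mu> + inverse (real (Suc n))) \<longlonglongrightarrow> \<mu>"
    using tendsto_add[OF tendsto_const LIMSEQ_inverse_real_of_nat] by simp
  then have "x \<in> D \<and> f x \<le> \<mu>"
    using lsc x s unfolding seq_lsc_on_def by (metis less_imp_le)
  then show ?thesis
    using \<mu>_le by force
qed

text \<open>Comparing \<open>f\<close> on the segment from \<open>x\<close> to \<open>z\<close> with the subgradient inequality at \<open>x\<close> and letting
  the segment shrink upgrades it to a quadratic lower bound.\<close>
lemma strongly_convex_on_subgradient_ineq:
  fixes f :: "'a::real_inner \<Rightarrow> real"
  assumes sc: "strongly_convex_on D f \<sigma>" and \<sigma>: "\<sigma> > 0" and x: "x \<in> D" and z: "z \<in> D"
    and sub: "\<And>w. w \<in> D \<Longrightarrow> f x + \<xi> \<bullet> (w - x) \<le> f w"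
  shows "f x + \<xi> \<bullet> (z - x) + \<sigma> * (norm (z - x))\<^sup>2 \<le> f z"
proof -
  define a where "a = f z - f x - \<xi> \<bullet> (z - x)"
  define d2 where "d2 = (norm (z - x))\<^sup>2"
  have segment: "\<sigma> * (1 - t) * d2 \<le> a" if t: "0 < t" "t \<le> 1" for t
  proof -
    define w where "w = t *\<^sub>R z + (1 - t) *\<^sub>R x"
    have wD: "w \<in> D" and cv: "f w + \<sigma> * t * (1 - t) * d2 \<le> t * f z + (1 - t) * f x"
      using sc z x t unfolding strongly_convex_on_def w_def d2_def by auto
    have "f x + t * (\<xi> \<bullet> (z - x)) \<le> f w"
      using sub[OF wD] by (simp add: w_def algebra_simps)
    with cv have "t * (\<sigma> * (1 - t) * d2) \<le> t * a"
      by (simp add: a_def algebra_simps)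
    then show ?thesis
      using t by simp
  qed
  have "\<sigma> * d2 \<le> a"
  proof (rule ccontr)
    assume neg: "\<not> \<sigma> * d2 \<le> a"
    have "0 \<le> a" "0 \<le> d2"
      using segment[of 1] by (simp_all add: d2_def)
    with neg have d2: "d2 > 0"
      by (cases "d2 = 0") auto
    define t where "t = min 1 ((\<sigma> * d2 - a) / (2 * \<sigma> * d2))"
    have t: "0 < t" "t \<le> 1"
      using neg d2 \<sigma> by (auto simp: t_def)
    have "t * (\<sigma> * d2) \<le> (\<sigma> * d2 - a) / (2 * \<sigma> * d2) * (\<sigma> * d2)"
      by (rule mult_right_mono) (use \<sigma> d2 in \<open>auto simp: t_def\<close>)
    also have "\<dots> = (\<sigma> * d2 - a) / 2"
      using \<sigma> d2 by (simp add: field_simps)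
    finally have "\<sigma> * (1 - t) * d2 > a"
      using neg by (simp add: algebra_simps)
    then show False
      using segment[OF t] by simp
  qed
  then show ?thesis
    by (simp add: a_def d2_def)
qed

lemma strongly_convex_on_min_unique:
  fixes f :: "'a::real_inner \<Rightarrow> real"
  assumes sc: "strongly_convex_on D f \<sigma>" and \<sigma>: "\<sigma> > 0" and "x \<in> D"
    and min: "\<And>z. z \<in> D \<Longrightarrow> f x \<le> f z" and "y \<in> D" and "f y \<le> f x"
  shows "y = x"
proof -
  have "f x + 0 \<bullet> (y - x) + \<sigma> * (norm (y - x))\<^sup>2 \<le> f y"
    using strongly_convex_on_subgradient_ineq[OF sc \<sigma> \<open>x \<in> D\<close> \<open>y \<in> D\<close>, of 0] min by simp
  with \<open>f y \<le> f x\<close> have "\<sigma> * (norm (y - x))\<^sup>2 \<le> 0"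
    by simp
  then show ?thesis
    using \<sigma> by (simp add: mult_le_0_iff)
qed

lemma strongly_convex_on_bregman_three_point:
  fixes f :: "'a::real_inner \<Rightarrow> real"
  assumes sc: "strongly_convex_on D f \<sigma>" and \<sigma>: "\<sigma> > 0" and "x \<in> D" "x' \<in> D" "z \<in> D"
    and sub: "\<And>w. w \<in> D \<Longrightarrow> f x + \<xi> \<bullet> (w - x) \<le> f w"
  shows "(f z - f x' - \<xi>' \<bullet> (z - x')) - (f z - f x - \<xi> \<bullet> (z - x))
           \<le> (norm (\<xi>' - \<xi>))\<^sup>2 / (4 * \<sigma>) + (\<xi>' - \<xi>) \<bullet> (x - z)"
proof -
  define h d where "h = \<xi>' - \<xi>" and "d = x' - x"
  have "f x + \<xi> \<bullet> d + \<sigma> * (norm d)\<^sup>2 \<le> f x'"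
    using strongly_convex_on_subgradient_ineq[OF sc \<sigma> \<open>x \<in> D\<close> \<open>x' \<in> D\<close> sub] by (simp add: d_def)
  moreover have "\<xi> \<bullet> (z - x) - \<xi> \<bullet> d - \<xi>' \<bullet> (z - x') = h \<bullet> d + h \<bullet> (x - z)"
    by (simp add: h_def d_def inner_diff_left inner_diff_right algebra_simps)
  moreover have "h \<bullet> d - \<sigma> * (norm d)\<^sup>2 \<le> (norm h)\<^sup>2 / (4 * \<sigma>)"
    using norm_cauchy_schwarz[of h d] young_quadratic[OF \<sigma>, of "norm h" "norm d"] by linarith
  ultimately show ?thesis
    by (simp add: h_def)
qed

lemma norm_convex_combination_sq:
  fixes a b :: "'a::real_inner"
  shows "(norm (t *\<^sub>R a + (1 - t) *\<^sub>R b))\<^sup>2 + t * (1 - t) * (norm (a - b))\<^sup>2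
           = t * (norm a)\<^sup>2 + (1 - t) * (norm b)\<^sup>2"
  by (simp add: power2_norm_eq_inner inner_add_left inner_add_right inner_diff_left inner_diff_right
      inner_commute[of b a] algebra_simps)

lemma norm_scaleR_add_sq:
  fixes u v :: "'a::real_inner"
  shows "(norm (p *\<^sub>R u + q *\<^sub>R v))\<^sup>2 = p\<^sup>2 * (norm u)\<^sup>2 + 2 * p * q * (u \<bullet> v) + q\<^sup>2 * (norm v)\<^sup>2"
  unfolding power2_norm_eq_inner
  by (simp add: inner_add_left inner_add_right inner_commute[of v u] power2_eq_square algebra_simps)

lemma quadratic_nonneg_imp_linear_coeff_zero:
  fixes c A :: real
  assumes "0 \<le> A" and nonneg: "\<And>s. 0 \<le> s * c + s\<^sup>2 * A"
  shows "c = 0"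
proof -
  define s where "s = - c / (A + 1)"
  have c: "c = - s * (A + 1)"
    using \<open>0 \<le> A\<close> by (simp add: s_def)
  have "0 \<le> s * c + s\<^sup>2 * A"
    by (rule nonneg)
  also have "\<dots> = - s\<^sup>2"
    unfolding c by (simp add: power2_eq_square algebra_simps)
  finally show ?thesis
    using c by simp
qed

text \<open>\<open>\<phi>\<close> is represented by the minimiser of the strongly convex function
  \<open>\<onehalf>\<Parallel>z\<Parallel>\<^sup>2 - \<phi> z\<close>.\<close>
lemma riesz_representation:
  fixes \<phi> :: "'a::{real_inner, complete_space} \<Rightarrow> real"
  assumes "bounded_linear \<phi>"
  shows "\<exists>w. \<forall>v. \<phi> v = v \<bullet> w"
proof -
  interpret bounded_linear \<phi> by fact
  define f where "f z = (norm z)\<^sup>2 / 2 - \<phi> z" for z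
  have "strongly_convex_on UNIV f (1/2)"
    unfolding strongly_convex_on_def
  proof (intro ballI allI impI conjI)
    fix a b :: 'a and t :: real
    show "t *\<^sub>R a + (1 - t) *\<^sub>R b \<in> UNIV"
      by simp
    have "\<phi> (t *\<^sub>R a + (1 - t) *\<^sub>R b) = t * \<phi> a + (1 - t) * \<phi> b"
      by (simp add: add scale)
    then have "f (t *\<^sub>R a + (1 - t) *\<^sub>R b) + 1/2 * t * (1 - t) * (norm (a - b))\<^sup>2
        = ((norm (t *\<^sub>R a + (1 - t) *\<^sub>R b))\<^sup>2 + t * (1 - t) * (norm (a - b))\<^sup>2) / 2 - (t * \<phi> a + (1 - t) * \<phi> b)"
      by (simp add: f_def field_simps)
    also have "\<dots> = t * f a + (1 - t) * f b"
      unfolding norm_convex_combination_sq by (simp add: f_def field_simps)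
    finally show "f (t *\<^sub>R a + (1 - t) *\<^sub>R b) + 1/2 * t * (1 - t) * (norm (a - b))\<^sup>2 \<le> t * f a + (1 - t) * f b"
      by simp
  qed
  moreover have "seq_lsc_on UNIV f"
    unfolding seq_lsc_on_def
  proof (intro allI impI conjI)
    fix s x c l
    assume H: "s \<longlonglongrightarrow> x \<and> (\<forall>n. s n \<in> UNIV) \<and> (\<forall>n. f (s n) \<le> c n) \<and> c \<longlonglongrightarrow> l"
    show "x \<in> UNIV"
      by simp
    have "(\<lambda>n. f (s n)) \<longlonglongrightarrow> f x"
      unfolding f_def using H by (intro tendsto_intros tendsto) auto
    then show "f x \<le> l"
      using H by (intro LIMSEQ_le[of "\<lambda>n. f (s n)" _ c]) auto
  qed
  ultimately obtain z where z: "\<And>v. f z \<le> f v"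
    using strongly_convex_on_has_min[of UNIV f "1/2"] by auto
  have "z \<bullet> v - \<phi> v = 0" for v
  proof (rule quadratic_nonneg_imp_linear_coeff_zero)
    show "0 \<le> (norm v)\<^sup>2 / 2"
      by simp
    fix s
    have "(norm (z + s *\<^sub>R v))\<^sup>2 = (norm z)\<^sup>2 + 2 * s * (z \<bullet> v) + s\<^sup>2 * (norm v)\<^sup>2"
      using norm_scaleR_add_sq[of 1 z s v] by simp
    then show "0 \<le> s * (z \<bullet> v - \<phi> v) + s\<^sup>2 * ((norm v)\<^sup>2 / 2)"
      using z[of "z + s *\<^sub>R v"] by (simp add: f_def add scale power2_eq_square algebra_simps)
  qed
  then show ?thesis
    by (metis eq_iff_diff_eq_0 inner_commute)
qed

lemma adjoint_works_hilbert:
  fixes f :: "'a::{real_inner, complete_space} \<Rightarrow> 'b::real_inner"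
  assumes "bounded_linear f"
  shows "f x \<bullet> y = x \<bullet> adjoint f y"
proof -
  have "\<exists>w. \<forall>v. f v \<bullet> y = v \<bullet> w" for y
    by (rule riesz_representation[OF bounded_linear_compose[OF bounded_linear_inner_left assms]])
  then have "\<exists>g. \<forall>v y. f v \<bullet> y = v \<bullet> g y"
    by metis
  then have "\<forall>v y. f v \<bullet> y = v \<bullet> adjoint f y"
    unfolding adjoint_def by (rule someI_ex)
  then show ?thesis
    by blast
qed

lemma norm_adjoint_blinfun_le:
  fixes T :: "'a::{real_inner, complete_space} \<Rightarrow>\<^sub>L 'b::real_inner"
  shows "norm (adjoint (blinfun_apply T) v) \<le> norm T * norm v"
proof -
  define u where "u = adjoint (blinfun_apply T) v"
  have "norm u * norm u = T u \<bullet> v"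
    using adjoint_works_hilbert[OF blinfun.bounded_linear_right, of T u v]
    by (simp add: u_def power2_norm_eq_inner[symmetric] power2_eq_square)
  also have "\<dots> \<le> norm (T u) * norm v"
    by (rule norm_cauchy_schwarz)
  also have "\<dots> \<le> (norm T * norm u) * norm v"
    by (rule mult_right_mono[OF norm_blinfun]) simp
  also have "\<dots> = norm u * (norm T * norm v)"
    by simp
  finally show ?thesis
    by (cases "u = 0") (simp_all add: u_def)
qed

lemma proper_fun_finite:
  "proper_fun R \<Longrightarrow> z \<in> effdom R \<Longrightarrow> R z = ereal (real_of_ereal (R z))"
  unfolding proper_fun_def effdom_def by (cases "R z") auto

lemma strongly_convex_real_part:
  assumes "proper_fun R" and "strongly_convex R \<sigma>"
  shows "strongly_convex_on (effdom R) (\<lambda>z. real_of_ereal (R z)) \<sigma>"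
  unfolding strongly_convex_on_def
proof (intro ballI allI impI)
  fix a b and t :: real
  assume a: "a \<in> effdom R" and b: "b \<in> effdom R" and t: "0 \<le> t \<and> t \<le> 1"
  define w where "w = t *\<^sub>R a + (1 - t) *\<^sub>R b"
  define q where "q = t * real_of_ereal (R a) + (1 - t) * real_of_ereal (R b)"
  have "R w + ereal (\<sigma> * t * (1 - t) * (norm (a - b))\<^sup>2) \<le> ereal t * R a + ereal (1 - t) * R b"
    using assms(2) a b t unfolding strongly_convex_def w_def by blast
  also have "\<dots> = ereal q"
    using proper_fun_finite[OF assms(1) a] proper_fun_finite[OF assms(1) b] unfolding q_def
    by (metis plus_ereal.simps(1) times_ereal.simps(1))
  finally have ineq: "R w + ereal (\<sigma> * t * (1 - t) * (norm (a - b))\<^sup>2) \<le> ereal q" .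
  then have wD: "w \<in> effdom R"
    unfolding effdom_def by (cases "R w") auto
  with ineq have "real_of_ereal (R w) + \<sigma> * t * (1 - t) * (norm (a - b))\<^sup>2 \<le> q"
    by (metis proper_fun_finite[OF assms(1)] ereal_less_eq(3) plus_ereal.simps(1))
  with wD show "w \<in> effdom R \<and> real_of_ereal (R w) + \<sigma> * t * (1 - t) * (norm (a - b))\<^sup>2 \<le> q"
    by simp
qed

lemma lsc_fun_real_part:
  assumes "proper_fun R" and "lsc_fun R"
  shows "seq_lsc_on (effdom R) (\<lambda>z. real_of_ereal (R z))"
  unfolding seq_lsc_on_def
proof (intro allI impI)
  fix s x c l
  assume H: "s \<longlonglongrightarrow> x \<and> (\<forall>n. s n \<in> effdom R) \<and> (\<forall>n. real_of_ereal (R (s n)) \<le> c n) \<and> c \<longlonglongrightarrow> l"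
  have "R (s n) \<le> ereal (c n)" for n
    using H proper_fun_finite[OF assms(1)] by (metis ereal_less_eq(3))
  then have "R x \<le> liminf (\<lambda>n. ereal (c n))"
    using assms(2) H unfolding lsc_fun_def by (metis (no_types, lifting) Liminf_mono always_eventually order_trans)
  also have "\<dots> = ereal l"
    using H by (intro lim_imp_Liminf) (auto intro: tendsto_ereal)
  finally have Rx: "R x \<le> ereal l" .
  then have "x \<in> effdom R"
    unfolding effdom_def by (cases "R x") auto
  with Rx show "x \<in> effdom R \<and> real_of_ereal (R x) \<le> l"
    by (metis proper_fun_finite[OF assms(1)] ereal_less_eq(3))
qed

lemma subdiff_iff_real_part:
  assumes "proper_fun R"
  shows "\<xi> \<in> subdiff R x \<longleftrightarrow>
    x \<in> effdom R \<and> (\<forall>z\<in>effdom R. real_of_ereal (R x) + \<xi> \<bullet> (z - x) \<le> real_of_ereal (R z))"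
proof
  assume sub: "\<xi> \<in> subdiff R x"
  then have xD: "x \<in> effdom R"
    unfolding subdiff_def effdom_def by auto
  have "real_of_ereal (R x) + \<xi> \<bullet> (z - x) \<le> real_of_ereal (R z)" if "z \<in> effdom R" for z
    using sub proper_fun_finite[OF assms xD] proper_fun_finite[OF assms that] unfolding subdiff_def
    by (metis (no_types, lifting) ereal_less_eq(3) mem_Collect_eq plus_ereal.simps(1))
  with xD show "x \<in> effdom R \<and> (\<forall>z\<in>effdom R. real_of_ereal (R x) + \<xi> \<bullet> (z - x) \<le> real_of_ereal (R z))"
    by blast
next
  assume H: "x \<in> effdom R \<and> (\<forall>z\<in>effdom R. real_of_ereal (R x) + \<xi> \<bullet> (z - x) \<le> real_of_ereal (R z))"
  have "R x + ereal (\<xi> \<bullet> (z - x)) \<le> R z" for z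
  proof (cases "z \<in> effdom R")
    case True
    then show ?thesis
      using H proper_fun_finite[OF assms] by (metis ereal_less_eq(3) plus_ereal.simps(1))
  next
    case False
    then show ?thesis
      unfolding effdom_def by simp
  qed
  moreover have "R x < \<infinity>" "R x \<noteq> -\<infinity>"
    using H assms unfolding effdom_def proper_fun_def by auto
  ultimately show "\<xi> \<in> subdiff R x"
    unfolding subdiff_def by simp
qed

lemma bregman_real_part:
  assumes "proper_fun R" and "z \<in> effdom R" and "x \<in> effdom R"
  shows "bregman R \<xi> z x = ereal (real_of_ereal (R z) - real_of_ereal (R x) - \<xi> \<bullet> (z - x))"
  unfolding bregman_def using proper_fun_finite[OF assms(1,2)] proper_fun_finite[OF assms(1,3)]
  by (metis ereal_minus(1))

text \<open>The definite description in \<open>grad_conj R \<xi>\<close> is proper: \<open>R - \<langle>\<xi>, \<sqdot>\<rangle>\<close> has a minimiser, unique by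
  the quadratic growth around it.\<close>
lemma grad_conj_subdiff:
  fixes R :: "'a::{real_inner, complete_space} \<Rightarrow> ereal"
  assumes pr: "proper_fun R" and "lsc_fun R" and "strongly_convex R \<sigma>" and \<sigma>: "\<sigma> > 0"
  shows "\<xi> \<in> subdiff R (grad_conj R \<xi>)"
proof -
  define f where "f z = real_of_ereal (R z) - \<xi> \<bullet> z" for z
  have sc: "strongly_convex_on (effdom R) f \<sigma>"
    unfolding f_def by (rule strongly_convex_on_minus_inner[OF strongly_convex_real_part[OF pr assms(3)]])
  have "seq_lsc_on (effdom R) f"
    unfolding f_def by (rule seq_lsc_on_minus_inner[OF lsc_fun_real_part[OF pr assms(2)]])
  moreover have "effdom R \<noteq> {}"
    using pr unfolding proper_fun_def effdom_def by auto
  ultimately obtain x where xD: "x \<in> effdom R" and xmin: "\<And>z. z \<in> effdom R \<Longrightarrow> f x \<le> f z"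
    using strongly_convex_on_has_min[OF sc \<sigma>] by blast
  have f_ereal: "R z - ereal (\<xi> \<bullet> z) = ereal (f z)" if "z \<in> effdom R" for z
    using proper_fun_finite[OF pr that] unfolding f_def by (metis ereal_minus(1))
  have not_dom: "R z - ereal (\<xi> \<bullet> z) = \<infinity>" if "z \<notin> effdom R" for z
    using that unfolding effdom_def by simp
  have x_min: "\<forall>z. R x - ereal (\<xi> \<bullet> x) \<le> R z - ereal (\<xi> \<bullet> z)"
    by (metis f_ereal not_dom xD xmin ereal_less_eq(1) ereal_less_eq(3))
  have "y = x" if y_min: "\<forall>z. R y - ereal (\<xi> \<bullet> y) \<le> R z - ereal (\<xi> \<bullet> z)" for y
  proof -
    have yD: "y \<in> effdom R"
      using y_min[rule_format, of x] f_ereal[OF xD] not_dom by force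
    moreover have "f y \<le> f x"
      using y_min f_ereal xD yD by (metis ereal_less_eq(3))
    ultimately show "y = x"
      using strongly_convex_on_min_unique[OF sc \<sigma> xD] xmin by blast
  qed
  then have "grad_conj R \<xi> = x"
    unfolding grad_conj_def using x_min by (rule the_equality[rotated])
  moreover have "real_of_ereal (R x) + \<xi> \<bullet> (z - x) \<le> real_of_ereal (R z)" if "z \<in> effdom R" for z
    using xmin[OF that] by (simp add: f_def inner_diff_right)
  ultimately show ?thesis
    using xD by (simp add: subdiff_iff_real_part[OF pr])
qed

lemma clipped_weight_bound:
  fixes \<beta>bar :: ereal and v :: "'a::real_normed_vector"
  assumes "\<beta>bar > 0"
    and \<beta>: "\<beta> = (if v = 0 then 0 else real_of_ereal (min (ereal (max 0 (t / (norm v)\<^sup>2))) \<beta>bar))"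
  shows "0 \<le> \<beta>" and "\<beta> * (\<beta> * (norm v)\<^sup>2 - 2 * t) \<le> 0"
proof -
  have "0 \<le> \<beta> \<and> \<beta> * (\<beta> * (norm v)\<^sup>2 - 2 * t) \<le> 0"
  proof (cases "v = 0")
    case False
    define q where "q = t / (norm v)\<^sup>2"
    have \<beta>_range: "0 \<le> \<beta> \<and> \<beta> \<le> max 0 q"
      using \<open>\<beta>bar > 0\<close> \<beta> False by (cases \<beta>bar) (auto simp: q_def min_def max_def)
    show ?thesis
    proof (cases "\<beta> = 0")
      case False
      with \<beta>_range have "\<beta> \<le> q"
        by (auto simp: max_def split: if_splits)
      then have "\<beta> * (norm v)\<^sup>2 \<le> t"
        using \<open>v \<noteq> 0\<close> by (simp add: q_def pos_le_divide_eq)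
      moreover have "0 \<le> \<beta> * (norm v)\<^sup>2"
        using \<beta>_range by simp
      ultimately have "\<beta> * (norm v)\<^sup>2 - 2 * t \<le> 0"
        by linarith
      then show ?thesis
        using \<beta>_range by (simp add: mult_nonneg_nonpos)
    qed simp
  qed (simp add: \<beta>)
  then show "0 \<le> \<beta>" and "\<beta> * (\<beta> * (norm v)\<^sup>2 - 2 * t) \<le> 0"
    by auto
qed

lemma tangential_cone_residual_bound:
  fixes F :: "'a::real_normed_vector \<Rightarrow> 'b::real_inner" and L :: "'a \<Rightarrow> 'b"
  assumes "linear L" and "0 \<le> \<eta>"
    and tcc: "norm (F z - F x - L (z - x)) \<le> \<eta> * norm (F z - F x)"
    and "F z = y" and noise: "norm (y\<delta> - y) \<le> \<delta>"
  shows "(1 - \<eta>) * (norm (F x - y\<delta>))\<^sup>2 - (1 + \<eta>) * \<delta> * norm (F x - y\<delta>) \<le> (F x - y\<delta>) \<bullet> L (x - z)"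
proof -
  define r e w where "r = F x - y\<delta>" and "e = F x - y" and "w = L (x - z)"
  have "L (z - x) = - w"
    using linear_neg[OF \<open>linear L\<close>, of "x - z"] by (simp add: w_def)
  then have "norm (e - w) \<le> \<eta> * norm e"
    using tcc \<open>F z = y\<close> by (simp add: e_def norm_minus_commute algebra_simps)
  then have "r \<bullet> (e - w) \<le> norm r * (\<eta> * norm e)"
    using norm_cauchy_schwarz[of r "e - w"] mult_left_mono[of _ _ "norm r"] by force
  also have "\<dots> \<le> norm r * (\<eta> * (norm r + \<delta>))"
  proof -
    have "norm e \<le> norm r + \<delta>"
      using norm_triangle_ineq[of r "y\<delta> - y"] noise by (simp add: r_def e_def)
    then show ?thesis
      using \<open>0 \<le> \<eta>\<close> by (simp add: mult_left_mono)
  qed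
  finally have dev: "r \<bullet> (e - w) \<le> \<eta> * (norm r)\<^sup>2 + \<eta> * \<delta> * norm r"
    by (simp add: power2_eq_square algebra_simps)
  have "r \<bullet> e = (norm r)\<^sup>2 + r \<bullet> (y\<delta> - y)"
    by (simp add: r_def e_def power2_norm_eq_inner inner_diff_right algebra_simps)
  moreover have "- (norm r * \<delta>) \<le> r \<bullet> (y\<delta> - y)"
    using Cauchy_Schwarz_ineq2[of r "y\<delta> - y"] mult_left_mono[OF noise norm_ge_zero[of r]] by linarith
  ultimately have "(norm r)\<^sup>2 - \<delta> * norm r \<le> r \<bullet> e"
    by (simp add: algebra_simps)
  moreover have "r \<bullet> w = r \<bullet> e - r \<bullet> (e - w)"
    by (simp add: inner_diff_right)
  ultimately have "(norm r)\<^sup>2 - \<delta> * norm r - (\<eta> * (norm r)\<^sup>2 + \<eta> * \<delta> * norm r) \<le> r \<bullet> w"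
    using dev by linarith
  then show ?thesis
    by (simp add: r_def w_def algebra_simps)
qed

lemma step_size_bound:
  fixes g :: "'a::real_normed_vector" and r :: "'b::real_normed_vector"
  assumes "0 < \<mu>0" and "0 < Lc" and g_le: "norm g \<le> Lc * norm r"
    and \<alpha>: "\<alpha> = (if adaptive then (if g = 0 then \<mu>1 else min (\<mu>0 * (norm r)\<^sup>2 / (norm g)\<^sup>2) \<mu>1)
                else \<mu>0 / Lc\<^sup>2)"
  shows "\<alpha> * (norm g)\<^sup>2 \<le> \<mu>0 * (norm r)\<^sup>2"
proof (cases adaptive)
  case True
  show ?thesis
  proof (cases "g = 0")
    case False
    then have "\<alpha> \<le> \<mu>0 * (norm r)\<^sup>2 / (norm g)\<^sup>2"
      using \<alpha> \<open>adaptive\<close> by simp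
    then show ?thesis
      using False by (simp add: pos_le_divide_eq)
  qed (use \<open>0 < \<mu>0\<close> in simp)
next
  case False
  have "(norm g)\<^sup>2 \<le> (Lc * norm r)\<^sup>2"
    using g_le by (simp add: power_mono)
  then have "\<mu>0 / Lc\<^sup>2 * (norm g)\<^sup>2 \<le> \<mu>0 / Lc\<^sup>2 * (Lc * norm r)\<^sup>2"
    using \<open>0 < \<mu>0\<close> by (intro mult_left_mono) simp_all
  also have "\<dots> = \<mu>0 * (norm r)\<^sup>2"
    using \<open>0 < Lc\<close> by (simp add: power_mult_distrib)
  finally show ?thesis
    using \<alpha> False by simp
qed

locale noisy_momentum_iteration =
  fixes R :: "'a::{real_inner, complete_space} \<Rightarrow> ereal"
    and F :: "'a \<Rightarrow> 'b::real_inner"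
    and Lop :: "'a \<Rightarrow> ('a \<Rightarrow>\<^sub>L 'b)"
    and y y\<delta> :: 'b
    and x0 \<xi>0 x_ref :: 'a
    and \<sigma> \<rho> \<eta> Lc \<delta> \<tau> \<mu>0 \<mu>1 c0 :: real
    and \<beta>bar :: ereal
    and adaptive :: bool
    and k :: nat
    and xi x g m :: "nat \<Rightarrow> 'a"
    and r :: "nat \<Rightarrow> 'b"
    and \<alpha> \<beta> \<gamma> :: "nat \<Rightarrow> real"
  assumes R_proper: "proper_fun R" and R_lsc: "lsc_fun R"
    and \<sigma>_pos: "\<sigma> > 0" and R_sc: "strongly_convex R \<sigma>"
    and \<rho>_pos: "\<rho> > 0" and \<xi>0_sub: "\<xi>0 \<in> subdiff R x0"
    and x_ref_sol: "F x_ref = y" and x_ref_close: "bregman R \<xi>0 x_ref x0 \<le> ereal (\<sigma> * \<rho>\<^sup>2)"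
    and \<eta>_nonneg: "0 \<le> \<eta>"
    and tcc: "\<And>u v. u \<in> cball x0 (2 * \<rho>) \<Longrightarrow> v \<in> cball x0 (2 * \<rho>) \<Longrightarrow>
               norm (F u - F v - blinfun_apply (Lop v) (u - v)) \<le> \<eta> * norm (F u - F v)"
    and Lc_pos: "Lc > 0"
    and L_bound: "\<And>u. u \<in> cball x0 (2 * \<rho>) \<Longrightarrow> norm (Lop u) \<le> Lc"
    and noise: "norm (y\<delta> - y) \<le> \<delta>"
    and \<tau>_pos: "\<tau> > 0" and \<beta>bar_pos: "\<beta>bar > 0"
    and \<mu>0_pos: "\<mu>0 > 0" and \<mu>1_pos: "\<mu>1 > 0"
    and c0_def: "c0 = 1 - (1 + \<eta>) / \<tau> - \<eta> - \<mu>0 / (4 * \<sigma>)"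
    and c0_pos: "c0 > 0"
    and init_xi: "xi 0 = \<xi>0" and init_x: "x 0 = x0"
    and res: "\<And>n. n < k \<Longrightarrow> r n = F (x n) - y\<delta>"
    and grad: "\<And>n. n < k \<Longrightarrow> g n = adjoint (blinfun_apply (Lop (x n))) (r n)"
    and step: "\<And>n. n < k \<Longrightarrow> \<alpha> n =
        (if adaptive then
           (if g n = 0 then \<mu>1 else min (\<mu>0 * (norm (r n))\<^sup>2 / (norm (g n))\<^sup>2) \<mu>1)
         else \<mu>0 / Lc\<^sup>2)"
    and mom0: "m 0 = 0"
    and mom: "\<And>n. Suc n < k \<Longrightarrow> m (Suc n) = xi (Suc n) - xi n"
    and gam0: "\<gamma> 0 = 0"
    and gam: "\<And>n. Suc n < k \<Longrightarrow> \<gamma> (Suc n) =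
        m (Suc n) \<bullet> (x (Suc n) - x n) - (1 - \<eta>) * \<alpha> n * (norm (r n))\<^sup>2
        + (1 + \<eta>) * \<alpha> n * \<delta> * norm (r n) + \<beta> n * \<gamma> n"
    and bet: "\<And>n. n < k \<Longrightarrow> \<beta> n =
        (if m n = 0 then 0
         else real_of_ereal (min (ereal (max 0 ((\<alpha> n * (g n \<bullet> m n) - 2 * \<sigma> * \<gamma> n)
                                                / (norm (m n))\<^sup>2))) \<beta>bar))"
    and upd_xi: "\<And>n. n < k \<Longrightarrow> xi (Suc n) = xi n - \<alpha> n *\<^sub>R g n + \<beta> n *\<^sub>R m n"
    and upd_x: "\<And>n. n < k \<Longrightarrow> x (Suc n) = grad_conj R (xi (Suc n))"
    and no_stop: "\<And>n. n < k \<Longrightarrow> norm (r n) > \<tau> * \<delta>"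
begin

definition \<Delta> :: "'a \<Rightarrow> nat \<Rightarrow> real" where
  "\<Delta> z n = real_of_ereal (R z) - real_of_ereal (R (x n)) - xi n \<bullet> (z - x n)"

lemma xi_subdiff: "n \<le> k \<Longrightarrow> xi n \<in> subdiff R (x n)"
proof (cases n)
  case (Suc j)
  moreover assume "n \<le> k"
  ultimately show ?thesis
    using upd_x[of j] grad_conj_subdiff[OF R_proper R_lsc R_sc \<sigma>_pos] by simp
qed (simp add: init_xi init_x \<xi>0_sub)

lemma x_in_effdom: "n \<le> k \<Longrightarrow> x n \<in> effdom R"
  using xi_subdiff subdiff_iff_real_part[OF R_proper] by blast

lemma subgradient_ineq:
  "n \<le> k \<Longrightarrow> w \<in> effdom R \<Longrightarrow> real_of_ereal (R (x n)) + xi n \<bullet> (w - x n) \<le> real_of_ereal (R w)"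
  using xi_subdiff subdiff_iff_real_part[OF R_proper] by blast

lemma bregman_eq_\<Delta>: "n \<le> k \<Longrightarrow> z \<in> effdom R \<Longrightarrow> bregman R (xi n) z (x n) = ereal (\<Delta> z n)"
  unfolding \<Delta>_def using bregman_real_part[OF R_proper] x_in_effdom by blast

lemma \<Delta>_lower_bound: "n \<le> k \<Longrightarrow> z \<in> effdom R \<Longrightarrow> \<sigma> * (norm (z - x n))\<^sup>2 \<le> \<Delta> z n"
  using strongly_convex_on_subgradient_ineq[OF strongly_convex_real_part[OF R_proper R_sc] \<sigma>_pos
      x_in_effdom] subgradient_ineq
  unfolding \<Delta>_def by fastforce

lemma \<Delta>_three_point:
  assumes "n < k" and "z \<in> effdom R"
  shows "\<Delta> z (Suc n) - \<Delta> z n \<le> (norm (xi (Suc n) - xi n))\<^sup>2 / (4 * \<sigma>) + (xi (Suc n) - xi n) \<bullet> (x n - z)"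
  unfolding \<Delta>_def
  by (rule strongly_convex_on_bregman_three_point[OF strongly_convex_real_part[OF R_proper R_sc] \<sigma>_pos])
     (use assms x_in_effdom subgradient_ineq in auto)

lemma \<alpha>_nonneg: "n < k \<Longrightarrow> 0 \<le> \<alpha> n"
  using step \<mu>0_pos \<mu>1_pos by auto

lemma gradient_bound: "n < k \<Longrightarrow> x n \<in> cball x0 (2 * \<rho>) \<Longrightarrow> norm (g n) \<le> Lc * norm (r n)"
  using grad norm_adjoint_blinfun_le[of "Lop (x n)" "r n"] L_bound[of "x n"]
  by (metis mult_right_mono norm_ge_zero order_trans)

lemma residual_bound:
  assumes "n < k" and "x n \<in> cball x0 (2 * \<rho>)" and "z \<in> cball x0 (2 * \<rho>)" and "F z = y"
  shows "(1 - \<eta>) * (norm (r n))\<^sup>2 - (1 + \<eta>) * \<delta> * norm (r n) \<le> g n \<bullet> (x n - z)"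
proof -
  have "g n \<bullet> (x n - z) = r n \<bullet> blinfun_apply (Lop (x n)) (x n - z)"
    using adjoint_works_hilbert[OF blinfun.bounded_linear_right, of "Lop (x n)" "x n - z" "r n"]
    by (simp add: grad[OF \<open>n < k\<close>] inner_commute)
  moreover have "(1 - \<eta>) * (norm (F (x n) - y\<delta>))\<^sup>2 - (1 + \<eta>) * \<delta> * norm (F (x n) - y\<delta>)
      \<le> (F (x n) - y\<delta>) \<bullet> blinfun_apply (Lop (x n)) (x n - z)"
    by (rule tangential_cone_residual_bound[where F = F and L = "blinfun_apply (Lop (x n))",
          OF _ \<eta>_nonneg tcc[OF assms(3,2)] \<open>F z = y\<close> noise])
      (simp add: blinfun.bounded_linear_right bounded_linear.linear)
  ultimately show ?thesis
    by (simp add: res[OF \<open>n < k\<close>])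
qed

lemma momentum_term_bound:
  assumes "n < k" and "x n \<in> cball x0 (2 * \<rho>)" and "z \<in> cball x0 (2 * \<rho>)" and "F z = y"
    and "m n \<bullet> (x n - z) \<le> \<gamma> n"
  shows "(xi (Suc n) - xi n) \<bullet> (x n - z)
           \<le> \<beta> n * \<gamma> n - \<alpha> n * ((1 - \<eta>) * (norm (r n))\<^sup>2 - (1 + \<eta>) * \<delta> * norm (r n))"
proof -
  have "\<alpha> n * ((1 - \<eta>) * (norm (r n))\<^sup>2 - (1 + \<eta>) * \<delta> * norm (r n)) \<le> \<alpha> n * (g n \<bullet> (x n - z))"
    using \<alpha>_nonneg[OF \<open>n < k\<close>] residual_bound[OF assms(1-4)] by (rule mult_left_mono[rotated])
  moreover have "\<beta> n * (m n \<bullet> (x n - z)) \<le> \<beta> n * \<gamma> n"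
    using clipped_weight_bound(1)[OF \<beta>bar_pos bet[OF \<open>n < k\<close>]] assms(5) by (rule mult_left_mono[rotated])
  moreover have "(xi (Suc n) - xi n) \<bullet> (x n - z) = \<beta> n * (m n \<bullet> (x n - z)) - \<alpha> n * (g n \<bullet> (x n - z))"
    using upd_xi[OF \<open>n < k\<close>] by (simp add: inner_diff_left)
  ultimately show ?thesis
    by linarith
qed

lemma gamma_step:
  assumes "Suc n < k" and "x n \<in> cball x0 (2 * \<rho>)" and "z \<in> cball x0 (2 * \<rho>)" and "F z = y"
    and "m n \<bullet> (x n - z) \<le> \<gamma> n"
  shows "m (Suc n) \<bullet> (x (Suc n) - z) \<le> \<gamma> (Suc n)"
proof -
  have "m (Suc n) \<bullet> (x (Suc n) - z) = m (Suc n) \<bullet> (x (Suc n) - x n) + (xi (Suc n) - xi n) \<bullet> (x n - z)"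
    using mom[OF assms(1)] by (simp add: inner_diff_right)
  also have "\<dots> \<le> m (Suc n) \<bullet> (x (Suc n) - x n)
      + (\<beta> n * \<gamma> n - \<alpha> n * ((1 - \<eta>) * (norm (r n))\<^sup>2 - (1 + \<eta>) * \<delta> * norm (r n)))"
    using momentum_term_bound assms by simp
  also have "\<dots> = \<gamma> (Suc n)"
    using gam[OF assms(1)] by (simp add: algebra_simps)
  finally show ?thesis .
qed

text \<open>The choice of \<open>\<beta> n\<close> makes the momentum contribution to \<open>\<Parallel>xi (Suc n) - xi n\<Parallel>\<^sup>2\<close> at most
  \<open>-4\<sigma> \<beta> n \<gamma> n\<close>; this cancels the term \<open>\<beta> n \<gamma> n\<close> of momentum_term_bound.\<close>
lemma increment_sq_bound:
  assumes "n < k"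
  shows "(norm (xi (Suc n) - xi n))\<^sup>2 / (4 * \<sigma>) \<le> (\<alpha> n)\<^sup>2 * (norm (g n))\<^sup>2 / (4 * \<sigma>) - \<beta> n * \<gamma> n"
proof -
  have increment: "xi (Suc n) - xi n = (- \<alpha> n) *\<^sub>R g n + \<beta> n *\<^sub>R m n"
    using upd_xi[OF assms] by simp
  have "(norm (xi (Suc n) - xi n))\<^sup>2 = (\<alpha> n)\<^sup>2 * (norm (g n))\<^sup>2
      + \<beta> n * (\<beta> n * (norm (m n))\<^sup>2 - 2 * (\<alpha> n * (g n \<bullet> m n) - 2 * \<sigma> * \<gamma> n)) - 4 * \<sigma> * (\<beta> n * \<gamma> n)"
    unfolding increment norm_scaleR_add_sq by (simp add: power2_eq_square algebra_simps)
  then have "(norm (xi (Suc n) - xi n))\<^sup>2 \<le> (\<alpha> n)\<^sup>2 * (norm (g n))\<^sup>2 - 4 * \<sigma> * (\<beta> n * \<gamma> n)"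
    using clipped_weight_bound(2)[OF \<beta>bar_pos bet[OF assms]] by linarith
  then have "(norm (xi (Suc n) - xi n))\<^sup>2 / (4 * \<sigma>)
      \<le> ((\<alpha> n)\<^sup>2 * (norm (g n))\<^sup>2 - 4 * \<sigma> * (\<beta> n * \<gamma> n)) / (4 * \<sigma>)"
    using \<sigma>_pos by (simp add: divide_right_mono)
  also have "\<dots> = (\<alpha> n)\<^sup>2 * (norm (g n))\<^sup>2 / (4 * \<sigma>) - \<beta> n * \<gamma> n"
    using \<sigma>_pos by (simp add: field_simps)
  finally show ?thesis .
qed

lemma descent_step:
  assumes "n < k" and "x n \<in> cball x0 (2 * \<rho>)" and "z \<in> cball x0 (2 * \<rho>)" and "z \<in> effdom R"
    and "F z = y" and "m n \<bullet> (x n - z) \<le> \<gamma> n"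
  shows "\<Delta> z (Suc n) \<le> \<Delta> z n - c0 * \<alpha> n * (norm (r n))\<^sup>2"
proof -
  define h N A where "h = xi (Suc n) - xi n" and "N = norm (r n)"
    and "A = (1 - \<eta>) * N\<^sup>2 - (1 + \<eta>) * \<delta> * N"
  define G where "G = (norm (g n))\<^sup>2"
  have h_sq: "(norm h)\<^sup>2 / (4 * \<sigma>) \<le> (\<alpha> n)\<^sup>2 * G / (4 * \<sigma>) - \<beta> n * \<gamma> n"
    unfolding h_def G_def by (rule increment_sq_bound[OF assms(1)])
  have "(\<alpha> n)\<^sup>2 * G \<le> \<alpha> n * (\<mu>0 * N\<^sup>2)"
    using mult_left_mono[OF step_size_bound[OF \<mu>0_pos Lc_pos gradient_bound[OF assms(1,2)] step[OF assms(1)]]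
        \<alpha>_nonneg[OF assms(1)]]
    by (simp add: G_def N_def power2_eq_square mult.assoc)
  then have \<alpha>_sq: "(\<alpha> n)\<^sup>2 * G / (4 * \<sigma>) \<le> \<alpha> n * (\<mu>0 * N\<^sup>2) / (4 * \<sigma>)"
    using \<sigma>_pos by (simp add: divide_right_mono)
  have "\<delta> * N \<le> N / \<tau> * N"
    using no_stop[OF assms(1)] \<tau>_pos by (intro mult_right_mono) (simp_all add: N_def field_simps)
  then have noise_term: "\<alpha> n * (1 + \<eta>) * (\<delta> * N - N\<^sup>2 / \<tau>) \<le> 0"
    using \<alpha>_nonneg[OF assms(1)] \<eta>_nonneg
    by (intro mult_nonneg_nonpos) (simp_all add: power2_eq_square)
  have "\<Delta> z (Suc n) - \<Delta> z n \<le> (norm h)\<^sup>2 / (4 * \<sigma>) + h \<bullet> (x n - z)"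
    unfolding h_def by (rule \<Delta>_three_point[OF assms(1,4)])
  also have "\<dots> \<le> (\<alpha> n)\<^sup>2 * G / (4 * \<sigma>) - \<alpha> n * A"
    using h_sq momentum_term_bound[OF assms(1-3,5,6)] by (simp add: h_def N_def A_def)
  also have "\<dots> \<le> \<alpha> n * (\<mu>0 * N\<^sup>2) / (4 * \<sigma>) - \<alpha> n * A"
    using \<alpha>_sq by simp
  also have "\<dots> = \<alpha> n * (1 + \<eta>) * (\<delta> * N - N\<^sup>2 / \<tau>) - c0 * \<alpha> n * N\<^sup>2"
    unfolding A_def c0_def using \<sigma>_pos \<tau>_pos by (simp add: field_simps)
  finally show ?thesis
    using noise_term by (simp add: N_def)
qed

lemma x_ref_in_effdom: "x_ref \<in> effdom R"
proof (rule ccontr)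
  assume "x_ref \<notin> effdom R"
  then have "R x_ref = \<infinity>"
    unfolding effdom_def by simp
  moreover have "x0 \<in> effdom R"
    using x_in_effdom[of 0] init_x by simp
  then obtain c where "R x0 = ereal c"
    using proper_fun_finite[OF R_proper] by metis
  ultimately have "bregman R \<xi>0 x_ref x0 = \<infinity>"
    unfolding bregman_def by simp
  then show False
    using x_ref_close by simp
qed

lemma close_to_x_ref:
  assumes "n \<le> k" and "\<Delta> x_ref n \<le> \<sigma> * \<rho>\<^sup>2"
  shows "norm (x_ref - x n) \<le> \<rho>"
proof (rule power2_le_imp_le)
  have "\<sigma> * (norm (x_ref - x n))\<^sup>2 \<le> \<sigma> * \<rho>\<^sup>2"
    using \<Delta>_lower_bound[OF assms(1) x_ref_in_effdom] assms(2) by linarith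
  then show "(norm (x_ref - x n))\<^sup>2 \<le> \<rho>\<^sup>2"
    using \<sigma>_pos by simp
qed (use \<rho>_pos in simp)

lemma \<Delta>_x_ref_initial: "\<Delta> x_ref 0 \<le> \<sigma> * \<rho>\<^sup>2"
  using x_ref_close bregman_eq_\<Delta>[of 0 x_ref] x_ref_in_effdom init_xi init_x by simp

lemma in_ball_if_close_to_x_ref: "norm (x_ref - v) \<le> \<rho> \<Longrightarrow> v \<in> cball x0 (2 * \<rho>)"
  using close_to_x_ref[OF _ \<Delta>_x_ref_initial] init_x norm_triangle_ineq[of "x0 - x_ref" "x_ref - v"]
  by (simp add: dist_norm norm_minus_commute)

text \<open>The iterates stay within \<open>\<rho>\<close> of \<open>x_ref\<close>, because \<open>\<Delta> x_ref\<close> decreases; this needs the momentum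
  estimate for \<open>x_ref\<close>, which in turn needs the iterates in the ball.\<close>
lemma reference_invariant:
  "n \<le> k \<Longrightarrow> x n \<in> cball x0 (2 * \<rho>) \<and> \<Delta> x_ref n \<le> \<sigma> * \<rho>\<^sup>2 \<and> (n < k \<longrightarrow> m n \<bullet> (x n - x_ref) \<le> \<gamma> n)"
proof (induction n)
  case 0
  then show ?case
    using init_x \<rho>_pos \<Delta>_x_ref_initial mom0 gam0 by simp
next
  case (Suc n)
  then have n: "n < k" and IH: "x n \<in> cball x0 (2 * \<rho>)" "\<Delta> x_ref n \<le> \<sigma> * \<rho>\<^sup>2" "m n \<bullet> (x n - x_ref) \<le> \<gamma> n"
    by auto
  have x_ref_ball: "x_ref \<in> cball x0 (2 * \<rho>)"
    using in_ball_if_close_to_x_ref \<rho>_pos by simp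
  have "0 \<le> c0 * \<alpha> n * (norm (r n))\<^sup>2"
    using c0_pos \<alpha>_nonneg[OF n] by simp
  then have "\<Delta> x_ref (Suc n) \<le> \<sigma> * \<rho>\<^sup>2"
    using descent_step[OF n IH(1) x_ref_ball x_ref_in_effdom x_ref_sol IH(3)] IH(2) by linarith
  moreover from this have "x (Suc n) \<in> cball x0 (2 * \<rho>)"
    using close_to_x_ref Suc.prems in_ball_if_close_to_x_ref by blast
  moreover have "Suc n < k \<longrightarrow> m (Suc n) \<bullet> (x (Suc n) - x_ref) \<le> \<gamma> (Suc n)"
    using gamma_step IH(1,3) x_ref_ball x_ref_sol by blast
  ultimately show ?case
    by blast
qed

lemma iterates_in_ball: "n \<le> k \<Longrightarrow> x n \<in> cball x0 (2 * \<rho>)"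
  using reference_invariant by blast

lemma momentum_invariant:
  assumes "z \<in> cball x0 (2 * \<rho>)" and "F z = y"
  shows "n < k \<Longrightarrow> m n \<bullet> (x n - z) \<le> \<gamma> n"
proof (induction n)
  case (Suc n)
  then show ?case
    using gamma_step[OF _ iterates_in_ball assms] by simp
qed (simp add: mom0 gam0)

lemma bregman_descent:
  assumes "z \<in> cball x0 (2 * \<rho>)" and "z \<in> effdom R" and "F z = y" and "n < k"
  shows "bregman R (xi (Suc n)) z (x (Suc n)) \<le> bregman R (xi n) z (x n) - ereal (c0 * \<alpha> n * (norm (r n))\<^sup>2)"
  using descent_step[OF \<open>n < k\<close> iterates_in_ball assms(1-3) momentum_invariant[OF assms(1,3)]]
    bregman_eq_\<Delta>[OF _ \<open>z \<in> effdom R\<close>] \<open>n < k\<close> by simp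

end

theorem mainTheorem2:
  fixes R :: "'a::{real_inner, complete_space} \<Rightarrow> ereal"
    and F :: "'a \<Rightarrow> 'b::{real_inner, complete_space}"
    and domF :: "'a set"
    and Lop :: "'a \<Rightarrow> ('a \<Rightarrow>\<^sub>L 'b)"
    and y y\<delta> :: 'b
    and x0 \<xi>0 :: 'a
    and \<sigma> \<rho> \<eta> Lc \<delta> \<tau> \<mu>0 \<mu>1 c0 :: real
    and \<beta>bar :: ereal
    and adaptive :: bool
    and k :: nat
    and xi x g m :: "nat \<Rightarrow> 'a"
    and r :: "nat \<Rightarrow> 'b"
    and \<alpha> \<beta> \<gamma> :: "nat \<Rightarrow> real"
  assumes R_proper: "proper_fun R" and R_lsc: "lsc_fun R"
    and \<sigma>_pos: "\<sigma> > 0" and R_sc: "strongly_convex R \<sigma>"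
    \<comment> \<open>(b)\<close>
    and \<rho>_pos: "\<rho> > 0" and \<xi>0_sub: "\<xi>0 \<in> subdiff R x0"
    and ball_dom: "cball x0 (2 * \<rho>) \<subseteq> domF"
    and sol_ex: "\<exists>xb\<in>domF. F xb = y \<and> bregman R \<xi>0 xb x0 \<le> ereal (\<sigma> * \<rho>\<^sup>2)"
    \<comment> \<open>(c)\<close>
    and F_wc: "weakly_closed_op F domF"
    \<comment> \<open>(d)\<close>
    and L_cont: "continuous_on (cball x0 (2 * \<rho>)) Lop"
    and \<eta>_range: "0 \<le> \<eta>" "\<eta> < 1"
    and tcc: "\<And>u v. u \<in> cball x0 (2 * \<rho>) \<Longrightarrow> v \<in> cball x0 (2 * \<rho>) \<Longrightarrow>
               norm (F u - F v - blinfun_apply (Lop v) (u - v)) \<le> \<eta> * norm (F u - F v)"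
    and Lc_pos: "Lc > 0"
    and L_bound: "\<And>u. u \<in> cball x0 (2 * \<rho>) \<Longrightarrow> norm (Lop u) \<le> Lc"
    \<comment> \<open>noisy data and parameters\<close>
    and \<delta>_pos: "\<delta> > 0" and noise: "norm (y\<delta> - y) \<le> \<delta>"
    and \<tau>_gt: "\<tau> > 1" and \<beta>bar_pos: "\<beta>bar > 0"
    and \<mu>0_pos: "\<mu>0 > 0" and \<mu>1_pos: "\<mu>1 > 0"
    and c0_def: "c0 = 1 - (1 + \<eta>) / \<tau> - \<eta> - \<mu>0 / (4 * \<sigma>)"
    and c0_pos: "c0 > 0"
    \<comment> \<open>Algorithm 1 (iterates up to index k)\<close>
    and init_xi: "xi 0 = \<xi>0" and init_x: "x 0 = x0"
    and res: "\<And>n. n < k \<Longrightarrow> r n = F (x n) - y\<delta>"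
    and grad: "\<And>n. n < k \<Longrightarrow> g n = adjoint (blinfun_apply (Lop (x n))) (r n)"
    and step: "\<And>n. n < k \<Longrightarrow> \<alpha> n =
        (if adaptive then
           (if g n = 0 then \<mu>1 else min (\<mu>0 * (norm (r n))\<^sup>2 / (norm (g n))\<^sup>2) \<mu>1)
         else \<mu>0 / Lc\<^sup>2)"
    and mom0: "m 0 = 0"
    and mom: "\<And>n. Suc n < k \<Longrightarrow> m (Suc n) = xi (Suc n) - xi n"
    and gam0: "\<gamma> 0 = 0"
    and gam: "\<And>n. Suc n < k \<Longrightarrow> \<gamma> (Suc n) =
        m (Suc n) \<bullet> (x (Suc n) - x n) - (1 - \<eta>) * \<alpha> n * (norm (r n))\<^sup>2
        + (1 + \<eta>) * \<alpha> n * \<delta> * norm (r n) + \<beta> n * \<gamma> n"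
    and bet: "\<And>n. n < k \<Longrightarrow> \<beta> n =
        (if m n = 0 then 0
         else real_of_ereal (min (ereal (max 0 ((\<alpha> n * (g n \<bullet> m n) - 2 * \<sigma> * \<gamma> n)
                                                / (norm (m n))\<^sup>2))) \<beta>bar))"
    and upd_xi: "\<And>n. n < k \<Longrightarrow> xi (Suc n) = xi n - \<alpha> n *\<^sub>R g n + \<beta> n *\<^sub>R m n"
    and upd_x: "\<And>n. n < k \<Longrightarrow> x (Suc n) = grad_conj R (xi (Suc n))"
    \<comment> \<open>no stopping before k\<close>
    and no_stop: "\<And>n. n < k \<Longrightarrow> norm (r n) > \<tau> * \<delta>"
  shows "(\<forall>n\<le>k. x n \<in> cball x0 (2 * \<rho>)) \<and>
         (\<forall>xh. xh \<in> domF \<and> F xh = y \<and> xh \<in> cball x0 (2 * \<rho>) \<and> xh \<in> effdom R \<longrightarrow>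
            (\<forall>n<k. bregman R (xi (Suc n)) xh (x (Suc n))
                     \<le> bregman R (xi n) xh (x n) - ereal (c0 * \<alpha> n * (norm (r n))\<^sup>2)))"
proof -
  obtain x_ref where x_ref: "F x_ref = y" "bregman R \<xi>0 x_ref x0 \<le> ereal (\<sigma> * \<rho>\<^sup>2)"
    using sol_ex by blast
  interpret noisy_momentum_iteration R F Lop y y\<delta> x0 \<xi>0 x_ref \<sigma> \<rho> \<eta> Lc \<delta> \<tau> \<mu>0 \<mu>1 c0 \<beta>bar
      adaptive k xi x g m r \<alpha> \<beta> \<gamma>
    by (unfold_locales; (fact assms x_ref)?) (use \<tau>_gt in linarith)
  show ?thesis
    using iterates_in_ball bregman_descent by blast
qed

end
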